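(* Let $X$ be an $n$-dimensional polyhedral normed space and let $Y \subseteq X$ be a $k$-dimensional subspace, $2 \leq k \leq n-1$, which is in general position and satisfies $\lambda(Y, X)>1$. Then every Chalmers–Metcalf operator $T=\sum_{i=1}^{l}\alpha_i x_i \otimes f_i$ for $Y$ is supported on at least $n$ pairs, i.e. $l \geq n$.
   Context: A normed space $X=(\mathbb{R}^n,\|\cdot\|)$ is polyhedral if its unit ball $B_X$ is a convex polytope; write $\mathrm{ext}\, B_X=\{x_1,\dots,x_N\}$ and $\mathrm{ext}\, B_{X^*}=\{f_1,\dots,f_M\}$ for the extreme points of the unit balls of $X$ and $X^*$. Two linear subspaces $Y,Z\subseteq\mathbb{R}^n$ are in general position if $\dim \mathrm{lin}(Y\cup Z)=\min(\dim Y+\dim Z,n)$; a subspace $Y$ is in general position if it is in general position with every subspace $\mathrm{lin}\{x_i : i\in I\}$, $I\subseteq\{1,\dots,N\}$, and every subspace $\bigcap_{i\in I}\ker f_i$, $I\subseteq\{1,\dots,M\}$. A projection onto $Y$ is a linear $P:X\to Y$ with $P|_Y=\mathrm{id}_Y$; $\lambda(Y,X)$ is the infimum of the operator norms of projections and a minimal projection is one of norm $\lambda(Y,X)$. For $x\in X$, $f\in X^*$, $x\otimes f$ is the operator $z\mapsto f(z)x$. A Chalmers–Metcalf operator for $Y$ is an operator $T=\sum_{i=1}^{l}\alpha_i x_i\otimes f_i:X\to X$ with $(x_i,f_i)\in\mathrm{ext}\,B_X\times\mathrm{ext}\,B_{X^*}$, $\alpha_i>0$, $\sum_i\alpha_i=1$,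 $T(Y)\subseteq Y$, and $f_i(P_0(x_i))=\|P_0\|=\lambda(Y,X)$ for all $i$ and some fixed minimal projection $P_0:X\to Y$. *)

theory Defs
  imports "HOL-Analysis.Analysis"
begin

text \<open>A norm on R^n given as a function (the space X = (R^n, N)).\<close>
definition is_norm :: "(real^'n \<Rightarrow> real) \<Rightarrow> bool" where
  "is_norm N \<longleftrightarrow> (\<forall>x. N x = 0 \<longleftrightarrow> x = 0) \<and> (\<forall>c x. N (c *\<^sub>R x) = \<bar>c\<bar> * N x)
     \<and> (\<forall>x y. N (x + y) \<le> N x + N y)"

definition unit_ball :: "(real^'n \<Rightarrow> real) \<Rightarrow> (real^'n) set" where
  "unit_ball N = {x. N x \<le> 1}"

definition polyhedral_norm :: "(real^'n \<Rightarrow> real) \<Rightarrow> bool" where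
  "polyhedral_norm N \<longleftrightarrow> is_norm N \<and> polytope (unit_ball N)"

text \<open>Dual unit ball: linear functionals z \<mapsto> f \<bullet> z (identified with vectors f)
  of dual norm at most 1.\<close>
definition dual_unit_ball :: "(real^'n \<Rightarrow> real) \<Rightarrow> (real^'n) set" where
  "dual_unit_ball N = {f. \<forall>x. N x \<le> 1 \<longrightarrow> f \<bullet> x \<le> 1}"

definition ext_ball :: "(real^'n \<Rightarrow> real) \<Rightarrow> (real^'n) set" where
  "ext_ball N = {x. x extreme_point_of unit_ball N}"

definition ext_dual_ball :: "(real^'n \<Rightarrow> real) \<Rightarrow> (real^'n) set" where
  "ext_dual_ball N = {f. f extreme_point_of dual_unit_ball N}"

definition op_norm :: "(real^'n \<Rightarrow> real) \<Rightarrow> (real^'n \<Rightarrow> real^'n) \<Rightarrow> real" where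
  "op_norm N P = Sup {N (P x) | x. N x \<le> 1}"

definition is_projection :: "(real^'n) set \<Rightarrow> (real^'n \<Rightarrow> real^'n) \<Rightarrow> bool" where
  "is_projection Y P \<longleftrightarrow> linear P \<and> range P \<subseteq> Y \<and> (\<forall>y\<in>Y. P y = y)"

definition proj_const :: "(real^'n \<Rightarrow> real) \<Rightarrow> (real^'n) set \<Rightarrow> real" where
  "proj_const N Y = Inf {op_norm N P | P. is_projection Y P}"

definition minimal_projection ::
  "(real^'n \<Rightarrow> real) \<Rightarrow> (real^'n) set \<Rightarrow> (real^'n \<Rightarrow> real^'n) \<Rightarrow> bool" where
  "minimal_projection N Y P \<longleftrightarrow> is_projection Y P \<and> op_norm N P = proj_const N Y"

definition general_position_pair :: "(real^'n) set \<Rightarrow> (real^'n) set \<Rightarrow> bool" where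
  "general_position_pair Y Z \<longleftrightarrow> dim (span (Y \<union> Z)) = min (dim Y + dim Z) CARD('n)"

definition in_general_position :: "(real^'n \<Rightarrow> real) \<Rightarrow> (real^'n) set \<Rightarrow> bool" where
  "in_general_position N Y \<longleftrightarrow>
     (\<forall>I \<subseteq> ext_ball N. general_position_pair Y (span I)) \<and>
     (\<forall>F \<subseteq> ext_dual_ball N. general_position_pair Y {z. \<forall>f\<in>F. f \<bullet> z = 0})"

text \<open>Chalmers--Metcalf operator T = \<Sum>i<l. \<alpha> i (x i \<otimes> f i), where (x\<otimes>f) z = (f \<bullet> z) x.\<close>
definition CM_operator ::
  "(real^'n \<Rightarrow> real) \<Rightarrow> (real^'n) set \<Rightarrow> nat \<Rightarrow> (nat \<Rightarrow> real) \<Rightarrow> (nat \<Rightarrow> real^'n)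
     \<Rightarrow> (nat \<Rightarrow> real^'n) \<Rightarrow> bool" where
  "CM_operator N Y l \<alpha> x f \<longleftrightarrow>
     (\<forall>i<l. x i \<in> ext_ball N \<and> f i \<in> ext_dual_ball N \<and> \<alpha> i > 0) \<and>
     (\<Sum>i<l. \<alpha> i) = 1 \<and>
     (\<forall>z\<in>Y. (\<Sum>i<l. (\<alpha> i * (f i \<bullet> z)) *\<^sub>R x i) \<in> Y) \<and>
     (\<exists>P0. minimal_projection N Y P0 \<and>
        (\<forall>i<l. f i \<bullet> P0 (x i) = op_norm N P0 \<and> op_norm N P0 = proj_const N Y))"

end

theory Submission
  imports Defs
begin

text \<open>Write \<open>T = \<Sum> \<alpha>\<^sub>i x\<^sub>i \<otimes> f\<^sub>i\<close>, \<open>k = dim Y\<close> and let \<open>P\<^sub>0\<close> be the minimal projection. Both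
  \<open>tr (T P\<^sub>0)\<close> and \<open>tr (P\<^sub>0 T)\<close> equal \<open>\<Sum> \<alpha>\<^sub>i f\<^sub>i(P\<^sub>0 x\<^sub>i) = \<lambda>(Y, X) > 1\<close>.
  If \<open>Y\<close> met \<open>span {x\<^sub>i}\<close> only in \<open>0\<close>, then \<open>T\<close> would vanish on \<open>Y\<close> and \<open>tr (T P\<^sub>0) = 0\<close>;
  if \<open>Y + \<Inter> ker f\<^sub>i\<close> were the whole space, then \<open>T\<close> would map into \<open>Y\<close> and
  \<open>tr (P\<^sub>0 T) = tr T = \<Sum> \<alpha>\<^sub>i f\<^sub>i(x\<^sub>i) \<le> 1\<close>. General position turns these two facts into
  \<open>dim span {x\<^sub>i} \<ge> n - k\<close> and \<open>Y \<inter> \<Inter> ker f\<^sub>i = 0\<close>.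
  Now pick \<open>n - k\<close> independent \<open>x\<^sub>j\<close>, \<open>j \<in> J\<close>; their span meets \<open>Y\<close> trivially. If fewer
  than \<open>k\<close> indices lay outside \<open>J\<close>, some \<open>y \<noteq> 0\<close> in \<open>Y\<close> would be killed by all \<open>f\<^sub>i\<close>,
  \<open>i \<notin> J\<close>; then \<open>T y \<in> Y \<inter> span {x\<^sub>j}\<close> is \<open>0\<close>, so also \<open>f\<^sub>j(y) = 0\<close> for \<open>j \<in> J\<close>, which is
  impossible. Hence \<open>l \<ge> (n - k) + k\<close>.\<close>

definition map_trace :: "('a::euclidean_space \<Rightarrow> 'a) \<Rightarrow> real" where
  "map_trace M = (\<Sum>b\<in>Basis. b \<bullet> M b)"

lemma map_trace_sum_rank_one:
  fixes g v :: "'i \<Rightarrow> 'a::euclidean_space"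
  shows "map_trace (\<lambda>z. \<Sum>i\<in>I. (g i \<bullet> z) *\<^sub>R v i) = (\<Sum>i\<in>I. g i \<bullet> v i)"
proof -
  have "map_trace (\<lambda>z. \<Sum>i\<in>I. (g i \<bullet> z) *\<^sub>R v i) = (\<Sum>b\<in>Basis. \<Sum>i\<in>I. (g i \<bullet> b) * (v i \<bullet> b))"
    by (simp add: map_trace_def inner_sum_right inner_commute)
  also have "\<dots> = (\<Sum>i\<in>I. g i \<bullet> v i)"
    by (subst sum.swap) (simp add: euclidean_inner[of "g i" "v i" for i])
  finally show ?thesis .
qed

definition rank_one_sum ::
  "nat \<Rightarrow> (nat \<Rightarrow> real) \<Rightarrow> (nat \<Rightarrow> 'a::euclidean_space) \<Rightarrow> (nat \<Rightarrow> 'a) \<Rightarrow> 'a \<Rightarrow> 'a" where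
  "rank_one_sum l \<alpha> x f z = (\<Sum>i<l. (\<alpha> i * (f i \<bullet> z)) *\<^sub>R x i)"

lemma linear_rank_one_sum: "linear (rank_one_sum l \<alpha> x f)"
  unfolding rank_one_sum_def
  by (rule linearI) (simp_all add: inner_add_right algebra_simps sum.distrib scaleR_sum_right)

lemma rank_one_sum_in_span: "rank_one_sum l \<alpha> x f z \<in> span (x ` {..<l})"
  unfolding rank_one_sum_def by (intro span_sum span_scale span_base) auto

lemma map_trace_comp_rank_one_sum:
  assumes "linear M"
  shows "map_trace (M \<circ> rank_one_sum l \<alpha> x f) = (\<Sum>i<l. \<alpha> i * (f i \<bullet> M (x i)))"
proof -
  have "map_trace (M \<circ> rank_one_sum l \<alpha> x f)
      = map_trace (\<lambda>z. \<Sum>i<l. ((\<alpha> i *\<^sub>R f i) \<bullet> z) *\<^sub>R M (x i))"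
    using assms
    by (auto simp: rank_one_sum_def linear_sum linear_scale intro!: arg_cong[where f=map_trace])
  also have "\<dots> = (\<Sum>i<l. (\<alpha> i *\<^sub>R f i) \<bullet> M (x i))"
    by (rule map_trace_sum_rank_one)
  finally show ?thesis by simp
qed

lemma map_trace_rank_one_sum_comp:
  assumes "linear M"
  shows "map_trace (rank_one_sum l \<alpha> x f \<circ> M) = (\<Sum>i<l. \<alpha> i * (f i \<bullet> M (x i)))"
proof -
  have "map_trace (rank_one_sum l \<alpha> x f \<circ> M)
      = map_trace (\<lambda>z. \<Sum>i<l. ((\<alpha> i *\<^sub>R adjoint M (f i)) \<bullet> z) *\<^sub>R x i)"
    using assms by (auto simp: rank_one_sum_def adjoint_clauses intro!: arg_cong[where f=map_trace])
  also have "\<dots> = (\<Sum>i<l. (\<alpha> i *\<^sub>R adjoint M (f i)) \<bullet> x i)"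
    by (rule map_trace_sum_rank_one)
  finally show ?thesis
    using assms by (simp add: adjoint_clauses inner_commute)
qed

lemma dim_span_Un_add_dim_Int:
  fixes S T :: "'a::euclidean_space set"
  assumes "subspace S" "subspace T"
  shows "dim (span (S \<union> T)) + dim (S \<inter> T) = dim S + dim T"
proof -
  have "span (S \<union> T) = {x + y |x y. x \<in> S \<and> y \<in> T}"
    using assms by (simp add: span_Un span_eq_iff[THEN iffD2])
  then show ?thesis using dim_sums_Int[OF assms] by simp
qed

lemma subspace_Int_nonzero:
  fixes S T :: "'a::euclidean_space set"
  assumes "subspace S" "subspace T" "DIM('a) < dim S + dim T"
  obtains v where "v \<in> S" "v \<in> T" "v \<noteq> 0"
proof -
  have "dim (span (S \<union> T)) \<le> DIM('a)"
    by (metis dim_subset_UNIV dimension_def)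
  then have "\<not> S \<inter> T \<subseteq> {0}"
    using dim_span_Un_add_dim_Int[OF assms(1,2)] assms(3) dim_eq_0[of "S \<inter> T"] by linarith
  then show ?thesis using that by blast
qed

lemma subspace_common_kernel: "subspace {z::'a::real_inner. \<forall>g\<in>G. g \<bullet> z = 0}"
  by (auto simp: subspace_def inner_add_right)

lemma dim_common_kernel:
  fixes G :: "'a::euclidean_space set"
  shows "dim {z. \<forall>g\<in>G. g \<bullet> z = 0} + dim G = DIM('a)"
proof -
  have "g \<bullet> z = 0" if "g \<in> span G" "\<forall>g\<in>G. g \<bullet> z = 0" for g z
    using that(1) by (rule span_induct) (use that(2) subspace_hyperplane2 in auto)
  then have "{z. \<forall>g\<in>G. g \<bullet> z = 0} = {y \<in> UNIV. \<forall>x\<in>span G. orthogonal x y}"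
    by (auto simp: orthogonal_def span_base)
  moreover have "dim {y \<in> UNIV. \<forall>x\<in>span G. orthogonal x y} + dim (span G) = dim (UNIV :: 'a set)"
    by (rule dim_subspace_orthogonal_to_vectors) auto
  ultimately show ?thesis by simp
qed

lemma independent_image_sum_eq_0:
  fixes x :: "'i \<Rightarrow> 'a::euclidean_space"
  assumes "independent (x ` J)" "inj_on x J" "(\<Sum>j\<in>J. c j *\<^sub>R x j) = 0" "j \<in> J"
  shows "c j = 0"
proof -
  let ?c = "\<lambda>v. c (inv_into J x v)"
  have "(\<Sum>v\<in>x ` J. ?c v *\<^sub>R v) = (\<Sum>j\<in>J. c j *\<^sub>R x j)"
    using assms(2) by (simp add: sum.reindex)
  then have "?c (x j) = 0"
    using assms(1,3,4) independent_explicit[of "x ` J"] by auto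
  then show ?thesis using assms(2,4) by simp
qed

lemma obtain_independent_image_subset:
  fixes x :: "'i \<Rightarrow> 'a::euclidean_space"
  assumes "m \<le> dim (x ` I)"
  obtains J where "J \<subseteq> I" "inj_on x J" "independent (x ` J)" "card J = m"
proof -
  obtain B where B: "B \<subseteq> x ` I" "independent B" "card B = dim (x ` I)"
    using basis_exists[of "x ` I"] by metis
  obtain C where C: "C \<subseteq> B" "card C = m"
    using obtain_subset_with_card_n assms B(3) by metis
  obtain J where "J \<subseteq> I" "inj_on x J" "C = x ` J"
    using C(1) B(1) subset_image_inj[of C x I] by auto
  then show ?thesis
    using that B(2) C independent_mono card_image by metis
qed

lemma general_position_pair_Int_eq_0:
  fixes Y Z :: "(real^'n) set"
  assumes "general_position_pair Y Z" "subspace Y" "subspace Z" "dim Y + dim Z \<le> CARD('n)"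
  shows "Y \<inter> Z = {0}"
proof -
  have "dim (Y \<inter> Z) = 0"
    using assms dim_span_Un_add_dim_Int[OF assms(2,3)] by (simp add: general_position_pair_def)
  then show ?thesis using assms(2,3) by (auto simp: subspace_0)
qed

lemma general_position_pair_span_eq_UNIV:
  fixes Y Z :: "(real^'n) set"
  assumes "general_position_pair Y Z" "CARD('n) \<le> dim Y + dim Z"
  shows "span (Y \<union> Z) = UNIV"
  using assms dim_eq_full[of "Y \<union> Z"] by (simp add: general_position_pair_def)

lemma dim_add_card_le_of_rank_one_sum:
  fixes Y :: "'a::euclidean_space set"
  assumes Y: "subspace Y" "\<forall>y\<in>Y. rank_one_sum l \<alpha> x f y \<in> Y"
    and \<alpha>: "\<forall>i<l. \<alpha> i \<noteq> 0"
    and ker: "Y \<inter> {z. \<forall>g\<in>f ` {..<l}. g \<bullet> z = 0} = {0}"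
    and J: "J \<subseteq> {..<l}" "inj_on x J" "independent (x ` J)" "Y \<inter> span (x ` J) = {0}"
  shows "dim Y + card J \<le> l"
proof (rule ccontr)
  assume too_few: "\<not> ?thesis"
  define G where "G = f ` ({..<l} - J)"
  have "dim G \<le> card G"
    by (rule dim_le_card) (auto simp: G_def span_base)
  also have "\<dots> \<le> l - card J"
    using card_image_le[of "{..<l} - J" f] J(1) by (simp add: G_def card_Diff_subset finite_subset)
  finally have "DIM('a) < dim Y + dim {z. \<forall>g\<in>G. g \<bullet> z = 0}"
    using too_few dim_common_kernel[of G] card_mono[OF finite_lessThan J(1)] by simp
  then obtain y where y: "y \<in> Y" "\<forall>g\<in>G. g \<bullet> y = 0" "y \<noteq> 0"
    using subspace_Int_nonzero[OF Y(1) subspace_common_kernel] by blast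
  have Ty: "rank_one_sum l \<alpha> x f y = (\<Sum>j\<in>J. (\<alpha> j * (f j \<bullet> y)) *\<^sub>R x j)"
    unfolding rank_one_sum_def
    by (rule sum.mono_neutral_right) (use J(1) y(2) in \<open>auto simp: G_def\<close>)
  have "(\<Sum>j\<in>J. (\<alpha> j * (f j \<bullet> y)) *\<^sub>R x j) \<in> Y \<inter> span (x ` J)"
    using Y(2) y(1) Ty by (auto intro: span_sum span_scale span_base)
  then have "\<alpha> j * (f j \<bullet> y) = 0" if "j \<in> J" for j
    using independent_image_sum_eq_0[OF J(3,2) _ that, of "\<lambda>j. \<alpha> j * (f j \<bullet> y)"] J(4) by auto
  then have "y \<in> Y \<inter> {z. \<forall>g\<in>f ` {..<l}. g \<bullet> z = 0}"
    using y(1,2) \<alpha> J(1) by (auto simp: G_def)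
  then show False using ker y(3) by blast
qed

lemma CM_operator_invariant:
  assumes "CM_operator N Y l \<alpha> x f" "y \<in> Y"
  shows "rank_one_sum l \<alpha> x f y \<in> Y"
  using assms by (simp add: CM_operator_def rank_one_sum_def)

lemma CM_operator_trace_eq_proj_const:
  assumes "CM_operator N Y l \<alpha> x f"
  obtains P where "is_projection Y P" "(\<Sum>i<l. \<alpha> i * (f i \<bullet> P (x i))) = proj_const N Y"
proof -
  obtain P where P: "minimal_projection N Y P" "\<forall>i<l. f i \<bullet> P (x i) = proj_const N Y"
    and "(\<Sum>i<l. \<alpha> i) = 1"
    using assms unfolding CM_operator_def by auto
  then have "(\<Sum>i<l. \<alpha> i * (f i \<bullet> P (x i))) = proj_const N Y"
    by (simp add: sum_distrib_right[symmetric])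
  then show ?thesis using that P(1) unfolding minimal_projection_def by blast
qed

lemma CM_operator_sum_le_1:
  assumes "CM_operator N Y l \<alpha> x f"
  shows "(\<Sum>i<l. \<alpha> i * (f i \<bullet> x i)) \<le> 1"
proof -
  have "\<alpha> i * (f i \<bullet> x i) \<le> \<alpha> i" if "i < l" for i
  proof -
    have "x i \<in> unit_ball N" "f i \<in> dual_unit_ball N" "\<alpha> i > 0"
      using assms that
      by (auto simp: CM_operator_def ext_ball_def ext_dual_ball_def extreme_point_of_def)
    then show ?thesis by (simp add: unit_ball_def dual_unit_ball_def mult_left_le)
  qed
  then have "(\<Sum>i<l. \<alpha> i * (f i \<bullet> x i)) \<le> (\<Sum>i<l. \<alpha> i)"
    by (intro sum_mono) auto
  then show ?thesis using assms by (simp add: CM_operator_def)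
qed

lemma CM_operator_Int_span_ne_0:
  assumes "CM_operator N Y l \<alpha> x f" "proj_const N Y \<noteq> 0"
  shows "Y \<inter> span (x ` {..<l}) \<noteq> {0}"
proof
  assume triv: "Y \<inter> span (x ` {..<l}) = {0}"
  obtain P where P: "is_projection Y P" "(\<Sum>i<l. \<alpha> i * (f i \<bullet> P (x i))) = proj_const N Y"
    using CM_operator_trace_eq_proj_const[OF assms(1)] by blast
  have "rank_one_sum l \<alpha> x f \<circ> P = (\<lambda>_. 0)"
    using P(1) triv CM_operator_invariant[OF assms(1)] rank_one_sum_in_span
    by (fastforce simp: is_projection_def)
  have "proj_const N Y = map_trace (rank_one_sum l \<alpha> x f \<circ> P)"
    using map_trace_rank_one_sum_comp[of P] P by (simp add: is_projection_def)
  also have "\<dots> = 0"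
    using \<open>rank_one_sum l \<alpha> x f \<circ> P = (\<lambda>_. 0)\<close> by (simp add: map_trace_def)
  finally show False using assms(2) by simp
qed

lemma CM_operator_span_Un_kernel_ne_UNIV:
  assumes "CM_operator N Y l \<alpha> x f" "subspace Y" "proj_const N Y > 1"
  shows "span (Y \<union> {z. \<forall>g\<in>f ` {..<l}. g \<bullet> z = 0}) \<noteq> UNIV"
proof
  let ?T = "rank_one_sum l \<alpha> x f" and ?K = "{z. \<forall>g\<in>f ` {..<l}. g \<bullet> z = 0}"
  assume full: "span (Y \<union> ?K) = UNIV"
  have TY: "?T z \<in> Y" for z
  proof -
    obtain a b where "z = a + b" "a \<in> span Y" "b \<in> span ?K"
      using full span_Un[of Y ?K] by blast
    then have ab: "z = a + b" "a \<in> Y" "b \<in> ?K"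
      by (simp_all only: span_eq_iff[THEN iffD2, OF assms(2)]
          span_eq_iff[THEN iffD2, OF subspace_common_kernel])
    have "?T b = 0"
      using ab(3) by (simp add: rank_one_sum_def)
    then have "?T z = ?T a"
      using ab(1) by (simp add: linear_add[OF linear_rank_one_sum])
    then show ?thesis using CM_operator_invariant[OF assms(1) ab(2)] by simp
  qed
  obtain P where P: "is_projection Y P" "(\<Sum>i<l. \<alpha> i * (f i \<bullet> P (x i))) = proj_const N Y"
    using CM_operator_trace_eq_proj_const[OF assms(1)] by blast
  have "P \<circ> ?T = ?T"
    using P(1) TY by (auto simp: is_projection_def)
  have "proj_const N Y = map_trace (P \<circ> ?T)"
    using map_trace_comp_rank_one_sum[of P] P by (simp add: is_projection_def)
  also have "\<dots> = map_trace (id \<circ> ?T)"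
    using \<open>P \<circ> ?T = ?T\<close> by simp
  also have "\<dots> = (\<Sum>i<l. \<alpha> i * (f i \<bullet> x i))"
    using map_trace_comp_rank_one_sum[OF linear_id] by simp
  finally show False using CM_operator_sum_le_1[OF assms(1)] assms(3) by linarith
qed

theorem mainTheorem8:
  fixes N :: "real^'n \<Rightarrow> real" and Y :: "(real^'n) set"
    and l :: nat and \<alpha> :: "nat \<Rightarrow> real" and x f :: "nat \<Rightarrow> real^'n"
  assumes "polyhedral_norm N"
    and "subspace Y"
    and "2 \<le> dim Y" and "dim Y \<le> CARD('n) - 1"
    and "in_general_position N Y"
    and "proj_const N Y > 1"
    and "CM_operator N Y l \<alpha> x f"
  shows "l \<ge> CARD('n)"
proof -
  let ?n = "CARD('n)" and ?k = "dim Y" and ?K = "{z. \<forall>g\<in>f ` {..<l}. g \<bullet> z = 0}"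
  have ext: "x ` {..<l} \<subseteq> ext_ball N" "f ` {..<l} \<subseteq> ext_dual_ball N"
    using assms(7) by (auto simp: CM_operator_def)
  have gp_span: "general_position_pair Y (span I)" if "I \<subseteq> x ` {..<l}" for I
    using assms(5) ext(1) that by (auto simp: in_general_position_def)
  have gp_ker: "general_position_pair Y ?K"
    using assms(5) ext(2) unfolding in_general_position_def by blast
  have "?n - ?k \<le> dim (x ` {..<l})"
  proof (rule ccontr)
    assume "\<not> ?thesis"
    then have "Y \<inter> span (x ` {..<l}) = {0}"
      using general_position_pair_Int_eq_0[OF gp_span assms(2) subspace_span] by simp
    then show False using CM_operator_Int_span_ne_0[OF assms(7)] assms(6) by simp
  qed
  then obtain J where J: "J \<subseteq> {..<l}" "inj_on x J" "independent (x ` J)" "card J = ?n - ?k"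
    by (rule obtain_independent_image_subset)
  have "Y \<inter> span (x ` J) = {0}"
    by (rule general_position_pair_Int_eq_0[OF gp_span assms(2) subspace_span])
      (use J assms(4) in \<open>simp_all add: dim_eq_card_independent card_image image_mono\<close>)
  moreover have "Y \<inter> ?K = {0}"
    using general_position_pair_span_eq_UNIV[OF gp_ker]
      CM_operator_span_Un_kernel_ne_UNIV[OF assms(7,2,6)]
      general_position_pair_Int_eq_0[OF gp_ker assms(2) subspace_common_kernel] nat_le_linear
    by blast
  moreover have "\<forall>i<l. \<alpha> i \<noteq> 0"
    using assms(7) by (auto simp: CM_operator_def)
  ultimately have "?k + card J \<le> l"
    using dim_add_card_le_of_rank_one_sum[OF assms(2) _ _ _ J(1-3)]
      CM_operator_invariant[OF assms(7)] by blast
  then show ?thesis using J(4) assms(4) by linarith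
qed

end
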